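(* In the setting below, suppose the persistent excitation assumption and the inexact disturbance bound assumption hold, and let $\Theta_t$ be the fixed-complexity parameter set with periodic update. Then for every $\epsilon>0$, every $\theta\in\Theta_0$ such that $[M_\Theta]_i(\theta-\theta^\ast)\ge\epsilon+\rho N_u\tau/\beta$ for some $i\in\{1,\dots,r\}$, and every $t\in\mathbb{N}_{\ge0}$, $$\Pr\{\theta\in\Theta_t\}\ \le\ \Bigl\{1-\Bigl[p_w\Bigl(\frac{\epsilon\beta}{N_u\tau}\Bigr)\Bigr]^{N_u}\Bigr\}^{\lfloor t/N_u\rfloor}.$$
   Context: Setting: $\theta^\ast\in\mathbb{R}^p$ is a fixed (unknown) parameter vector. $\mathcal{W}=\{w\in\mathbb{R}^{n_x}:\Pi_w w\le\pi_w\}$ is a compact convex polytope with $\pi_w>0$. The disturbances $w_0,w_1,\dots$ are independent random vectors in $\mathbb{R}^{n_x}$. $D_0,D_1,\dots\in\mathbb{R}^{n_x\times p}$ is a given (non-random) sequence of regressor matrices. For $t\ge1$ the (random) unfalsified parameter set is $\Delta_t=\{\theta\in\mathbb{R}^p: D_{t-1}(\theta^\ast-\theta)+w_{t-1}\in\mathcal{W}\}$. $\|\cdot\|$ is the Euclidean norm (induced 2-norm for matrices); $\mathcal{B}=\{x\in\mathbb{R}^{n_x}:\|x\|\le1\}$; $\oplus$ is Minkowski sum; $[M]_i$ is the $i$th row of $M$. Persistent excitation assumption: there exist $\tau>0$, $\beta>0$ and an integer $N_u\ge\lceil p/n_x\rceil$ such that for every $t\ge0$, $\|D_t\|\le\tau$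 and $\sum_{j=t}^{t+N_u-1}D_j^\top D_j\succeq\beta I$. Inexact disturbance bound assumption: there exist a compact set $\Omega\subset\mathbb{R}^{n_x}$ and $\rho>0$ with $\Omega\subseteq\mathcal{W}\subseteq\Omega\oplus\rho\mathcal{B}$, such that $w_t\in\Omega$ for all $t$, and a function $p_w:(0,\infty)\to(0,1]$ such that for all $w^0\in\partial\Omega$ (boundary of $\Omega$), all $\epsilon>0$ and all $t\ge0$, $\Pr\{\|w_t-w^0\|<\epsilon\}\ge p_w(\epsilon)$. Fixed-complexity parameter set with periodic update: $M_\Theta\in\mathbb{R}^{r\times p}$ has rows of unit Euclidean norm and is such that $\Theta(\mu):=\{\theta:M_\Theta\theta\le\mu\}$ is bounded for every $\mu\in\mathbb{R}^r$; $\Theta_0=\Theta(\mu_0)$ contains $\theta^\ast$. For $t\ge1$: if $t=kN_u$ for some integer $k\ge1$, then $\Theta_t=\Theta(\mu_t)$ with $[\mu_t]_i=\max\{[M_\Theta]_i\theta:\theta\in\Theta_{t-N_u}\cap\bigcap_{j=t-N_u+1}^t\Delta_j\}$ for $i=1,\dots,r$; otherwise $\Theta_t=\Theta_{t-1}$. *)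

theory Defs
  imports "HOL-Analysis.Analysis" "HOL-Probability.Probability"
begin

definition polyW :: "real^'n^'m \<Rightarrow> real^'m \<Rightarrow> (real^'n) set" where
  "polyW Piw piw = {w. \<forall>i. (Piw *v w) $ i \<le> piw $ i}"

definition ThetaP :: "real^'p^'r \<Rightarrow> real^'r \<Rightarrow> (real^'p) set" where
  "ThetaP MT mu = {\<theta>. \<forall>i. (MT *v \<theta>) $ i \<le> mu $ i}"

text \<open>Unfalsified set Delta_j (for j >= 1) for a realisation ws of the disturbance sequence.\<close>
definition unfalsified ::
  "(nat \<Rightarrow> real^'p^'n) \<Rightarrow> real^'p \<Rightarrow> (real^'n) set \<Rightarrow> (nat \<Rightarrow> real^'n) \<Rightarrow> nat \<Rightarrow> (real^'p) set" where
  "unfalsified D \<theta>s W ws j = {\<theta>. D (j - 1) *v (\<theta>s - \<theta>) + ws (j - 1) \<in> W}"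

text \<open>mu at the update times k*Nu (k = 0,1,...).\<close>
primrec mu_blk ::
  "real^'p^'r \<Rightarrow> real^'r \<Rightarrow> nat \<Rightarrow> (nat \<Rightarrow> real^'p^'n) \<Rightarrow> real^'p \<Rightarrow> (real^'n) set
     \<Rightarrow> (nat \<Rightarrow> real^'n) \<Rightarrow> nat \<Rightarrow> real^'r" where
  "mu_blk MT mu0 Nu D \<theta>s W ws 0 = mu0"
| "mu_blk MT mu0 Nu D \<theta>s W ws (Suc k) =
     (\<chi> i. Sup ((\<lambda>\<theta>. (MT *v \<theta>) $ i) `
        (ThetaP MT (mu_blk MT mu0 Nu D \<theta>s W ws k) \<inter>
         (\<Inter>j\<in>{k * Nu + 1 .. k * Nu + Nu}. unfalsified D \<theta>s W ws j))))"

text \<open>Theta_t with periodic update: constant between update times, so Theta_t = Theta(mu_{(t div Nu) Nu}).\<close>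
definition ThetaSeq ::
  "real^'p^'r \<Rightarrow> real^'r \<Rightarrow> nat \<Rightarrow> (nat \<Rightarrow> real^'p^'n) \<Rightarrow> real^'p \<Rightarrow> (real^'n) set
     \<Rightarrow> (nat \<Rightarrow> real^'n) \<Rightarrow> nat \<Rightarrow> (real^'p) set" where
  "ThetaSeq MT mu0 Nu D \<theta>s W ws t = ThetaP MT (mu_blk MT mu0 Nu D \<theta>s W ws (t div Nu))"

end

theory Submission
  imports Defs
begin

text \<open>
  Fix a row i with M_i (\<theta> - \<theta>*) large. Persistent excitation makes the Gram matrix
  G_b = \<Sum> D_j^T D_j of the b-th block of N_u regressors satisfy G_b \<ge> \<beta> I, so M_i^T = G_b u_b
  with |u_b| \<le> 1/\<beta>. Choose w0_j on the boundary of \<Omega> minimising w \<mapsto> (D_j u_b) \<cdot> w over \<Omega>.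
  For a parameter \<theta>' unfalsified during block b we have
  M_i (\<theta>* - \<theta>') = \<Sum> (D_j u_b) \<cdot> D_j (\<theta>* - \<theta>'), and D_j (\<theta>* - \<theta>') + w_j lies in
  W \<subseteq> \<Omega> + \<rho> B, so each term is at least -(\<rho> + \<delta>) |D_j u_b| once |w_j - w0_j| \<le> \<delta>.
  Hence if every disturbance of the block is within \<epsilon>\<beta>/(N_u \<tau>) of its w0_j, the update at
  the end of the block removes \<theta> for good. Each block does so with probability at least
  p_w(\<epsilon>\<beta>/(N_u \<tau>))^N_u, independently of the other blocks, and \<theta> survives to time t only
  if all \<lfloor>t/N_u\<rfloor> completed blocks fail.
\<close>

section \<open>Gram matrices and linear functionals\<close>

lemma matrix_vector_mult_sum:
  fixes F :: "'i \<Rightarrow> real^'n^'m"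
  shows "(\<Sum>j\<in>A. F j) *v x = (\<Sum>j\<in>A. F j *v x)"
  by (induction A rule: infinite_finite_induct) (auto simp: matrix_vector_mult_add_rdistrib)

lemma gram_sum_mult_inner:
  fixes D :: "'i \<Rightarrow> real^'p^'n"
  shows "((\<Sum>j\<in>B. transpose (D j) ** D j) *v u) \<bullet> x = (\<Sum>j\<in>B. (D j *v u) \<bullet> (D j *v x))"
  by (simp add: matrix_vector_mult_sum inner_sum_left matrix_vector_mul_assoc[symmetric]
      dot_lmul_matrix)

lemma posdef_matrix_solve_norm_le:
  fixes G :: "real^'p^'p"
  assumes posdef: "\<And>x. \<beta> * (norm x)\<^sup>2 \<le> x \<bullet> (G *v x)" and "\<beta> > 0"
  shows "\<exists>u. G *v u = c \<and> \<beta> * norm u \<le> norm c"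
proof -
  have "inj ((*v) G)"
  proof (rule linear_inj_on_iff_eq_0[THEN iffD2])
    show "\<forall>x\<in>UNIV. G *v x = 0 \<longrightarrow> x = 0"
    proof (intro ballI impI)
      fix x :: "real^'p" assume "G *v x = 0"
      then have "\<beta> * (norm x)\<^sup>2 \<le> 0" using posdef[of x] by simp
      then show "x = 0" using \<open>\<beta> > 0\<close> by (simp add: mult_le_0_iff)
    qed
  qed (simp_all add: matrix_vector_mul_linear)
  then obtain u where u: "G *v u = c"
    using linear_injective_imp_surjective[OF matrix_vector_mul_linear] by (metis surjE)
  have "\<beta> * (norm u)\<^sup>2 \<le> norm u * norm c"
    using posdef[of u] norm_cauchy_schwarz[of u c] u by simp
  then have "\<beta> * norm u \<le> norm c"
    by (cases "u = 0") (auto simp: power2_eq_square)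
  with u show ?thesis by blast
qed

lemma compact_frontier_attains_inf_inner:
  fixes S :: "'a::euclidean_space set"
  assumes "compact S" "S \<noteq> {}"
  shows "\<exists>w0\<in>frontier S. \<forall>w\<in>S. c \<bullet> w0 \<le> c \<bullet> w"
proof (cases "c = 0")
  case True
  have "S \<noteq> UNIV" using compact_imp_bounded[OF assms(1)] by auto
  then show ?thesis using frontier_not_empty[OF assms(2)] True by auto
next
  case False
  obtain w0 where w0: "w0 \<in> S" "\<forall>w\<in>S. c \<bullet> w0 \<le> c \<bullet> w"
    using continuous_attains_inf[OF assms, of "\<lambda>w. c \<bullet> w"] continuous_on_inner[OF continuous_on_const continuous_on_id]
    by blast
  have "w0 \<notin> interior S"
  proof
    assume "w0 \<in> interior S"
    then obtain e where e: "e > 0" "ball w0 e \<subseteq> S" using mem_interior by blast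
    define w1 where "w1 = w0 - (e / 2 / norm c) *\<^sub>R c"
    have "w1 \<in> S" using False e by (auto simp: w1_def dist_norm)
    moreover have "c \<bullet> w1 = c \<bullet> w0 - e / 2 * norm c"
      using False by (simp add: w1_def inner_diff_right power2_norm_eq_inner[symmetric] power2_eq_square)
    moreover have "e / 2 * norm c > 0" using False e(1) by simp
    ultimately show False using w0(2) by fastforce
  qed
  then show ?thesis
    using w0 compact_imp_closed[OF assms(1)] by (auto simp: frontier_def)
qed

lemma inner_ge_near_inner_minimiser:
  fixes v z ws w0 :: "'a::real_inner"
  assumes w0: "\<forall>w\<in>\<Omega>. v \<bullet> w0 \<le> v \<bullet> w"
    and W: "W \<subseteq> {a + b | a b. a \<in> \<Omega> \<and> b \<in> cball 0 \<rho>}"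
    and "z + ws \<in> W" and "norm (ws - w0) \<le> \<delta>"
  shows "- ((\<rho> + \<delta>) * norm v) \<le> v \<bullet> z"
proof -
  obtain a b where ab: "z + ws = a + b" "a \<in> \<Omega>" "norm b \<le> \<rho>"
    using W \<open>z + ws \<in> W\<close> by auto
  have "v \<bullet> z = (v \<bullet> a - v \<bullet> w0) + v \<bullet> b - v \<bullet> (ws - w0)"
    using arg_cong[OF ab(1), of "\<lambda>q. v \<bullet> q"] by (simp add: inner_add_right inner_diff_right)
  moreover have "v \<bullet> w0 \<le> v \<bullet> a" using w0 ab(2) by blast
  moreover have "- (norm v * \<rho>) \<le> v \<bullet> b"
    using Cauchy_Schwarz_ineq2[of v b] mult_left_mono[OF ab(3) norm_ge_zero[of v]] by linarith
  moreover have "v \<bullet> (ws - w0) \<le> norm v * \<delta>"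
    using norm_cauchy_schwarz[of v "ws - w0"] mult_left_mono[OF \<open>norm (ws - w0) \<le> \<delta>\<close> norm_ge_zero[of v]]
    by linarith
  ultimately show ?thesis by (simp add: algebra_simps)
qed

lemma gram_block_inner_lower_bound:
  fixes D :: "'i \<Rightarrow> real^'p^'n" and u x :: "real^'p"
  assumes G: "(\<Sum>j\<in>B. transpose (D j) ** D j) *v u = c"
    and "\<beta> > 0" and u: "\<beta> * norm u \<le> 1"
    and D: "\<And>j. onorm (\<lambda>x. D j *v x) \<le> \<tau>"
    and w0: "\<forall>j\<in>B. \<forall>w\<in>\<Omega>. (D j *v u) \<bullet> w0 j \<le> (D j *v u) \<bullet> w"
    and W: "W \<subseteq> {a + b | a b. a \<in> \<Omega> \<and> b \<in> cball 0 \<rho>}"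
    and consistent: "\<forall>j\<in>B. D j *v x + ws j \<in> W"
    and close: "\<forall>j\<in>B. norm (ws j - w0 j) \<le> \<delta>"
    and "0 \<le> \<rho> + \<delta>"
  shows "- ((\<rho> + \<delta>) * (real (card B) * \<tau> / \<beta>)) \<le> c \<bullet> x"
proof -
  have Du: "norm (D j *v u) \<le> \<tau> / \<beta>" for j
  proof -
    have "norm (D j *v u) \<le> onorm (\<lambda>x. D j *v x) * norm u"
      by (simp add: onorm matrix_vector_mul_bounded_linear)
    also have "\<dots> \<le> \<tau> * norm u" using D by (simp add: mult_right_mono)
    also have "\<dots> \<le> \<tau> / \<beta>"
      using u \<open>\<beta> > 0\<close> order_trans[OF onorm_pos_le[OF matrix_vector_mul_bounded_linear] D]
      by (simp add: field_simps) (metis mult.left_commute mult_left_mono mult.right_neutral)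
    finally show ?thesis .
  qed
  have "(\<Sum>j\<in>B. - ((\<rho> + \<delta>) * (\<tau> / \<beta>))) \<le> (\<Sum>j\<in>B. (D j *v u) \<bullet> (D j *v x))"
  proof (rule sum_mono)
    fix j assume "j \<in> B"
    then have "- ((\<rho> + \<delta>) * norm (D j *v u)) \<le> (D j *v u) \<bullet> (D j *v x)"
      using inner_ge_near_inner_minimiser[OF _ W] w0 consistent close by blast
    moreover have "(\<rho> + \<delta>) * norm (D j *v u) \<le> (\<rho> + \<delta>) * (\<tau> / \<beta>)"
      using mult_left_mono[OF Du \<open>0 \<le> \<rho> + \<delta>\<close>] .
    ultimately show "- ((\<rho> + \<delta>) * (\<tau> / \<beta>)) \<le> (D j *v u) \<bullet> (D j *v x)" by linarith
  qed
  also have "\<dots> = c \<bullet> x" using gram_sum_mult_inner[of D B u x] G by simp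
  finally show ?thesis by (simp add: algebra_simps)
qed

section \<open>Blocks of the update periods\<close>

text \<open>The b-th update uses the unfalsified sets \<Delta>_(j+1) for j \<in> block N b, see Suc_block.\<close>

definition block :: "nat \<Rightarrow> nat \<Rightarrow> nat set" where
  "block N b = {b * N ..< b * N + N}"

lemma finite_block [simp]: "finite (block N b)"
  and card_block [simp]: "card (block N b) = N"
  by (simp_all add: block_def)

lemma div_eq_if_mem_block: "j \<in> block N b \<Longrightarrow> j div N = b"
  by (auto simp: block_def mult.commute intro!: div_nat_eqI)

lemma disjoint_family_block: "disjoint_family (block N)"
  by (auto simp: disjoint_family_on_def dest!: div_eq_if_mem_block)

lemma Suc_block: "Suc ` block N b = {b * N + 1 .. b * N + N}"
  by (auto simp: block_def image_iff)

lemma block_eq_atLeastAtMost: "0 < N \<Longrightarrow> block N b = {b * N .. b * N + N - 1}"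
  by (auto simp: block_def)

lemma persistent_excitation_block_solutions:
  fixes D :: "nat \<Rightarrow> real^'p^'n"
  assumes PE: "\<forall>t x. \<beta> * (norm x)\<^sup>2 \<le> x \<bullet> ((\<Sum>j\<in>{t..t + N - 1}. transpose (D j) ** D j) *v x)"
    and "0 < \<beta>" "0 < N"
  obtains U where "\<And>b. (\<Sum>j\<in>block N b. transpose (D j) ** D j) *v U b = c"
    and "\<And>b. \<beta> * norm (U b) \<le> norm c"
proof -
  have "\<exists>u. (\<Sum>j\<in>block N b. transpose (D j) ** D j) *v u = c \<and> \<beta> * norm u \<le> norm c" for b
  proof (rule posdef_matrix_solve_norm_le[OF _ \<open>0 < \<beta>\<close>])
    show "\<beta> * (norm x)\<^sup>2 \<le> x \<bullet> ((\<Sum>j\<in>block N b. transpose (D j) ** D j) *v x)" for x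
      using PE by (simp add: block_eq_atLeastAtMost[OF \<open>0 < N\<close>])
  qed
  then show ?thesis using that by metis
qed

section \<open>The parameter set update\<close>

lemma ThetaP_Sup_update:
  fixes MT :: "real^'p^'r"
  assumes "S \<subseteq> ThetaP MT \<mu>" "S \<noteq> {}"
  shows "S \<subseteq> ThetaP MT (\<chi> i. Sup ((\<lambda>\<theta>. (MT *v \<theta>) $ i) ` S))"
    and "ThetaP MT (\<chi> i. Sup ((\<lambda>\<theta>. (MT *v \<theta>) $ i) ` S)) \<subseteq> ThetaP MT \<mu>"
proof -
  have bdd: "bdd_above ((\<lambda>\<theta>. (MT *v \<theta>) $ i) ` S)" for i
    using assms(1) by (intro bdd_aboveI[of _ "\<mu> $ i"]) (auto simp: ThetaP_def)
  show "S \<subseteq> ThetaP MT (\<chi> i. Sup ((\<lambda>\<theta>. (MT *v \<theta>) $ i) ` S))"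
    using bdd by (auto simp: ThetaP_def intro: cSup_upper)
  have "Sup ((\<lambda>\<theta>. (MT *v \<theta>) $ i) ` S) \<le> \<mu> $ i" for i
    using assms by (intro cSup_least) (auto simp: ThetaP_def)
  then show "ThetaP MT (\<chi> i. Sup ((\<lambda>\<theta>. (MT *v \<theta>) $ i) ` S)) \<subseteq> ThetaP MT \<mu>"
    by (auto simp: ThetaP_def intro: order_trans)
qed

lemma notin_ThetaP_Sup_update:
  fixes MT :: "real^'p^'r"
  assumes "S \<noteq> {}" "\<forall>\<theta>'\<in>S. (MT *v \<theta>') $ i \<le> B" "B < (MT *v \<theta>) $ i"
  shows "\<theta> \<notin> ThetaP MT (\<chi> i. Sup ((\<lambda>\<theta>. (MT *v \<theta>) $ i) ` S))"
proof -
  have "Sup ((\<lambda>\<theta>. (MT *v \<theta>) $ i) ` S) \<le> B"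
    using assms by (intro cSup_least) auto
  then show ?thesis using assms(3) by (auto simp: ThetaP_def intro!: exI[of _ i])
qed

lemma true_param_unfalsified: "ws (j - 1) \<in> W \<Longrightarrow> \<theta>s \<in> unfalsified D \<theta>s W ws j"
  by (simp add: unfalsified_def)

lemma true_param_in_ThetaP_mu_blk:
  assumes "\<theta>s \<in> ThetaP MT mu0" "\<forall>j. ws j \<in> W"
  shows "\<theta>s \<in> ThetaP MT (mu_blk MT mu0 Nu D \<theta>s W ws k)"
proof (induction k)
  case (Suc k)
  let ?S = "ThetaP MT (mu_blk MT mu0 Nu D \<theta>s W ws k) \<inter>
            (\<Inter>j\<in>{k * Nu + 1 .. k * Nu + Nu}. unfalsified D \<theta>s W ws j)"
  have "\<theta>s \<in> ?S" using Suc assms(2) by (simp add: true_param_unfalsified)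
  then show ?case using ThetaP_Sup_update(1)[of ?S] by auto
qed (use assms in simp)

lemma ThetaP_mu_blk_antimono:
  assumes "\<theta>s \<in> ThetaP MT mu0" "\<forall>j. ws j \<in> W" "k \<le> l"
  shows "ThetaP MT (mu_blk MT mu0 Nu D \<theta>s W ws l) \<subseteq> ThetaP MT (mu_blk MT mu0 Nu D \<theta>s W ws k)"
proof -
  have "ThetaP MT (mu_blk MT mu0 Nu D \<theta>s W ws (Suc k)) \<subseteq> ThetaP MT (mu_blk MT mu0 Nu D \<theta>s W ws k)" for k
    using true_param_in_ThetaP_mu_blk[OF assms(1,2), of Nu D k] assms(2)
    by (simp only: mu_blk.simps(2), intro ThetaP_Sup_update(2))
      (auto simp: true_param_unfalsified)
  then show ?thesis
    using decseqD[OF decseq_SucI, of "\<lambda>k. ThetaP MT (mu_blk MT mu0 Nu D \<theta>s W ws k)"] assms(3) by blast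
qed

lemma far_param_notin_ThetaSeq_after_close_block:
  fixes MT :: "real^'p^'r" and D :: "nat \<Rightarrow> real^'p^'n" and u :: "real^'p"
  assumes \<theta>s: "\<theta>s \<in> ThetaP MT mu0" and ws: "\<forall>j. ws j \<in> W"
    and W: "W \<subseteq> {a + b | a b. a \<in> \<Omega> \<and> b \<in> cball 0 \<rho>}" and "0 \<le> \<rho>"
    and "0 < Nu" "0 < \<beta>" "0 < \<tau>" and D: "\<And>j. onorm (\<lambda>x. D j *v x) \<le> \<tau>"
    and G: "(\<Sum>j\<in>block Nu b. transpose (D j) ** D j) *v u = MT $ i" and u: "\<beta> * norm u \<le> 1"
    and w0: "\<forall>j\<in>block Nu b. \<forall>w\<in>\<Omega>. (D j *v u) \<bullet> w0 j \<le> (D j *v u) \<bullet> w"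
    and close: "\<forall>j\<in>block Nu b. norm (ws j - w0 j) < e"
    and far: "(\<rho> + e) * (real Nu * \<tau> / \<beta>) \<le> (MT *v (\<theta> - \<theta>s)) $ i"
    and "b < t div Nu"
  shows "\<theta> \<notin> ThetaSeq MT mu0 Nu D \<theta>s W ws t"
proof -
  define q where "q = real Nu * \<tau> / \<beta>"
  define \<delta> where "\<delta> = Max ((\<lambda>j. norm (ws j - w0 j)) ` block Nu b)"
  have block_ne: "block Nu b \<noteq> {}" using \<open>0 < Nu\<close> by (simp add: block_def)
  have le_\<delta>: "\<forall>j\<in>block Nu b. norm (ws j - w0 j) \<le> \<delta>" by (simp add: \<delta>_def)
  have "\<delta> < e" using close block_ne by (simp add: \<delta>_def)
  have "0 \<le> \<delta>" using le_\<delta> block_ne by (meson ex_in_conv norm_ge_zero order_trans)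
  let ?S = "ThetaP MT (mu_blk MT mu0 Nu D \<theta>s W ws b) \<inter>
            (\<Inter>j\<in>{b * Nu + 1 .. b * Nu + Nu}. unfalsified D \<theta>s W ws j)"
  have excluded: "\<theta> \<notin> ThetaP MT (mu_blk MT mu0 Nu D \<theta>s W ws (Suc b))"
    unfolding mu_blk.simps(2)
  proof (rule notin_ThetaP_Sup_update[where B = "(MT *v \<theta>s) $ i + (\<rho> + \<delta>) * q"])
    have "\<theta>s \<in> ?S"
      using true_param_in_ThetaP_mu_blk[OF \<theta>s ws] ws by (simp add: true_param_unfalsified)
    then show "?S \<noteq> {}" by blast
    show "\<forall>\<theta>'\<in>?S. (MT *v \<theta>') $ i \<le> (MT *v \<theta>s) $ i + (\<rho> + \<delta>) * q"
    proof
      fix \<theta>' assume "\<theta>' \<in> ?S"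
      have "D j *v (\<theta>s - \<theta>') + ws j \<in> W" if "j \<in> block Nu b" for j
      proof -
        have "Suc j \<in> {b * Nu + 1 .. b * Nu + Nu}" using Suc_block[of Nu b] that by blast
        then have "\<theta>' \<in> unfalsified D \<theta>s W ws (Suc j)" using \<open>\<theta>' \<in> ?S\<close> by blast
        then show ?thesis by (simp add: unfalsified_def)
      qed
      then have "- ((\<rho> + \<delta>) * q) \<le> MT $ i \<bullet> (\<theta>s - \<theta>')"
        using gram_block_inner_lower_bound[OF G \<open>0 < \<beta>\<close> u D w0 W _ le_\<delta>] \<open>0 \<le> \<rho>\<close> \<open>0 \<le> \<delta>\<close>
        by (simp add: q_def)
      then show "(MT *v \<theta>') $ i \<le> (MT *v \<theta>s) $ i + (\<rho> + \<delta>) * q"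
        by (simp add: matrix_vector_mul_component inner_diff_right)
    qed
    have "0 < q" using \<open>0 < Nu\<close> \<open>0 < \<beta>\<close> \<open>0 < \<tau>\<close> by (simp add: q_def)
    then have "(\<rho> + \<delta>) * q < (\<rho> + e) * q" using \<open>\<delta> < e\<close> by simp
    moreover have "(MT *v (\<theta> - \<theta>s)) $ i = (MT *v \<theta>) $ i - (MT *v \<theta>s) $ i"
      by (simp add: matrix_vector_mult_diff_distrib)
    ultimately show "(MT *v \<theta>s) $ i + (\<rho> + \<delta>) * q < (MT *v \<theta>) $ i"
      using far[folded q_def] by linarith
  qed
  have "ThetaSeq MT mu0 Nu D \<theta>s W ws t \<subseteq> ThetaP MT (mu_blk MT mu0 Nu D \<theta>s W ws (Suc b))"
    unfolding ThetaSeq_def by (rule ThetaP_mu_blk_antimono[OF \<theta>s ws Suc_leI[OF \<open>b < t div Nu\<close>]])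
  with excluded show ?thesis by (blast dest: subsetD)
qed

section \<open>Independence across blocks\<close>

lemma (in prob_space) indep_events_compl_block_Inter:
  assumes indep: "indep_events E UNIV" and "0 < N"
  shows "indep_events (\<lambda>b. space M - (\<Inter>j\<in>block N b. E j)) UNIV"
proof -
  have events: "E j \<in> events" for j using indep unfolding indep_events_def by blast
  have "indep_sets (\<lambda>b. sigma_sets (space M) (\<Union>j\<in>block N b. {E j})) UNIV"
  proof (rule indep_sets_collect_sigma)
    show "indep_sets (\<lambda>j. {E j}) (\<Union>b\<in>UNIV. block N b)"
      using indep_sets_mono_index[OF subset_UNIV indep[unfolded indep_events_def_alt]] .
    show "Int_stable {E j}" for j by (simp add: Int_stable_def)
    show "disjoint_family_on (block N) UNIV" by (rule disjoint_family_block)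
  qed
  then show ?thesis
    unfolding indep_events_def_alt
  proof (rule indep_sets_mono_sets)
    fix b
    have "block N b \<noteq> {}" using \<open>0 < N\<close> by (simp add: block_def)
    then have "(\<Inter>j\<in>block N b. E j) \<in> sigma_sets (space M) (\<Union>j\<in>block N b. {E j})"
      using sets.sets_into_space[OF events] by (intro sigma_sets_INTER) auto
    then show "{space M - (\<Inter>j\<in>block N b. E j)} \<subseteq> sigma_sets (space M) (\<Union>j\<in>block N b. {E j})"
      by (auto intro: sigma_sets.Compl)
  qed
qed

lemma (in prob_space) prob_Inter_indep_events:
  assumes "indep_events E I" "J \<subseteq> I" "J \<noteq> {}" "finite J"
  shows "prob (\<Inter>j\<in>J. E j) = (\<Prod>j\<in>J. prob (E j))"
  using assms unfolding indep_events_def_alt by (intro indep_setsD) auto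

lemma (in prob_space) prob_le_if_no_block_Inter:
  assumes indep: "indep_events E UNIV" and "0 < N" and p: "\<And>j. p \<le> prob (E j)" "0 \<le> p"
    and S: "S \<subseteq> space M - (\<Union>b<K. \<Inter>j\<in>block N b. E j)"
  shows "prob S \<le> (1 - p ^ N) ^ K"
proof -
  let ?A = "\<lambda>b. \<Inter>j\<in>block N b. E j"
  have block_ne: "block N b \<noteq> {}" for b using \<open>0 < N\<close> by (simp add: block_def)
  have "E j \<in> events" for j using indep unfolding indep_events_def by blast
  then have A_events: "?A b \<in> events" for b
    using block_ne by (intro sets.finite_INT) auto
  have "p ^ N \<le> prob (?A b)" for b
  proof -
    have "p ^ N = (\<Prod>j\<in>block N b. p)" by simp
    also have "\<dots> \<le> (\<Prod>j\<in>block N b. prob (E j))" using p by (intro prod_mono) auto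
    also have "\<dots> = prob (?A b)"
      using prob_Inter_indep_events[OF indep subset_UNIV block_ne] by simp
    finally show ?thesis .
  qed
  then have compl_le: "prob (space M - ?A b) \<le> 1 - p ^ N" for b
    using A_events by (simp add: prob_compl)
  have "prob (space M - (\<Union>b<K. ?A b)) = (\<Prod>b<K. prob (space M - ?A b))"
  proof (cases "K = 0")
    case False
    then have "space M - (\<Union>b<K. ?A b) = (\<Inter>b<K. space M - ?A b)" by auto
    moreover have "prob (\<Inter>b<K. space M - ?A b) = (\<Prod>b<K. prob (space M - ?A b))"
      using False by (intro prob_Inter_indep_events[OF indep_events_compl_block_Inter[OF indep \<open>0 < N\<close>]]) auto
    ultimately show ?thesis by (simp only:)
  qed (simp add: prob_space)
  also have "\<dots> \<le> (\<Prod>b<K. 1 - p ^ N)"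
    using compl_le by (intro prod_mono) (simp add: measure_nonneg)
  finally have "prob (space M - (\<Union>b<K. ?A b)) \<le> (1 - p ^ N) ^ K" by simp
  moreover have "space M - (\<Union>b<K. ?A b) \<in> events"
    using A_events by (intro sets.Diff sets.top sets.finite_UN) auto
  ultimately show ?thesis using finite_measure_mono[OF S] by linarith
qed

theorem theorem5:
  fixes M :: "'a measure"
    and w :: "nat \<Rightarrow> 'a \<Rightarrow> real^'n"
    and D :: "nat \<Rightarrow> real^'p^'n"
    and \<theta>s :: "real^'p"
    and Piw :: "real^'n^'m" and piw :: "real^'m"
    and MT :: "real^'p^'r" and mu0 :: "real^'r"
    and \<tau> \<beta> \<rho> :: real and Nu :: nat
    and \<Omega> :: "(real^'n) set" and pw :: "real \<Rightarrow> real"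
    and \<epsilon> :: real and \<theta> :: "real^'p" and t :: nat
  assumes prob: "prob_space M"
    and indep: "prob_space.indep_vars M (\<lambda>_. borel) w UNIV"
    and W_compact: "compact (polyW Piw piw)"
    and piw_pos: "\<forall>i. piw $ i > 0"
    and tau_pos: "\<tau> > 0" and beta_pos: "\<beta> > 0"
    and Nu_ge: "int Nu \<ge> \<lceil>real CARD('p) / real CARD('n)\<rceil>"
    and D_bound: "\<forall>t. onorm (\<lambda>x. D t *v x) \<le> \<tau>"
    and PE: "\<forall>t x. x \<bullet> ((\<Sum>j\<in>{t..t + Nu - 1}. transpose (D j) ** D j) *v x) \<ge> \<beta> * (norm x)\<^sup>2"
    and Omega_compact: "compact \<Omega>"
    and rho_pos: "\<rho> > 0"
    and Omega_sub: "\<Omega> \<subseteq> polyW Piw piw"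
    and W_sub: "polyW Piw piw \<subseteq> {a + b | a b. a \<in> \<Omega> \<and> b \<in> cball 0 \<rho>}"
    and w_in: "\<forall>t. \<forall>\<omega>\<in>space M. w t \<omega> \<in> \<Omega>"
    and pw_range: "\<forall>e>0. 0 < pw e \<and> pw e \<le> 1"
    and pw_bound: "\<forall>w0\<in>frontier \<Omega>. \<forall>e>0. \<forall>t.
                     measure M {\<omega>\<in>space M. norm (w t \<omega> - w0) < e} \<ge> pw e"
    and MT_rows: "\<forall>i. norm (MT $ i) = 1"
    and MT_bounded: "\<forall>mu. bounded (ThetaP MT mu)"
    and theta0: "\<theta>s \<in> ThetaP MT mu0"
    and eps_pos: "\<epsilon> > 0"
    and theta_in: "\<theta> \<in> ThetaP MT mu0"
    and theta_far: "\<exists>i. (MT *v (\<theta> - \<theta>s)) $ i \<ge> \<epsilon> + \<rho> * real Nu * \<tau> / \<beta>"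
  shows "measure M {\<omega>\<in>space M. \<theta> \<in> ThetaSeq MT mu0 Nu D \<theta>s (polyW Piw piw) (\<lambda>j. w j \<omega>) t}
           \<le> (1 - (pw (\<epsilon> * \<beta> / (real Nu * \<tau>))) ^ Nu) ^ (t div Nu)"
proof -
  interpret prob_space M by (rule prob)
  have "0 < \<lceil>real CARD('p) / real CARD('n)\<rceil>" by simp
  then have "0 < Nu" using Nu_ge by linarith
  define e where "e = \<epsilon> * \<beta> / (real Nu * \<tau>)"
  have "0 < e" using eps_pos beta_pos tau_pos \<open>0 < Nu\<close> by (simp add: e_def)
  have "(\<rho> + e) * (real Nu * \<tau> / \<beta>) = \<epsilon> + \<rho> * real Nu * \<tau> / \<beta>"
    using beta_pos tau_pos \<open>0 < Nu\<close> by (simp add: e_def field_simps)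
  with theta_far obtain i where far: "(\<rho> + e) * (real Nu * \<tau> / \<beta>) \<le> (MT *v (\<theta> - \<theta>s)) $ i"
    by metis
  obtain U where U: "\<And>b. (\<Sum>j\<in>block Nu b. transpose (D j) ** D j) *v U b = MT $ i"
      "\<And>b. \<beta> * norm (U b) \<le> 1"
    using persistent_excitation_block_solutions[OF PE beta_pos \<open>0 < Nu\<close>, of "MT $ i"] MT_rows
    by metis
  have "\<Omega> \<noteq> {}" using w_in not_empty by blast
  then have "\<forall>j. \<exists>x\<in>frontier \<Omega>. \<forall>y\<in>\<Omega>. (D j *v U (j div Nu)) \<bullet> x \<le> (D j *v U (j div Nu)) \<bullet> y"
    using compact_frontier_attains_inf_inner[OF Omega_compact] by blast
  then obtain w0 where w0: "\<And>j. w0 j \<in> frontier \<Omega>"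
      "\<And>j. \<forall>x\<in>\<Omega>. (D j *v U (j div Nu)) \<bullet> w0 j \<le> (D j *v U (j div Nu)) \<bullet> x"
    by metis
  define E where "E j = {\<omega>\<in>space M. norm (w j \<omega> - w0 j) < e}" for j
  have "\<omega> \<notin> (\<Inter>j\<in>block Nu b. E j)"
    if "\<omega> \<in> space M" "\<theta> \<in> ThetaSeq MT mu0 Nu D \<theta>s (polyW Piw piw) (\<lambda>j. w j \<omega>) t" "b < t div Nu"
    for \<omega> b
  proof
    assume "\<omega> \<in> (\<Inter>j\<in>block Nu b. E j)"
    then have "\<forall>j\<in>block Nu b. norm (w j \<omega> - w0 j) < e" by (simp add: E_def)
    moreover have "\<forall>j\<in>block Nu b. \<forall>x\<in>\<Omega>. (D j *v U b) \<bullet> w0 j \<le> (D j *v U b) \<bullet> x"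
      using w0(2) by (metis div_eq_if_mem_block)
    moreover have "\<forall>j. w j \<omega> \<in> polyW Piw piw" using w_in Omega_sub that(1) by blast
    ultimately show False
      using far_param_notin_ThetaSeq_after_close_block[OF theta0 _ W_sub _ \<open>0 < Nu\<close> beta_pos tau_pos
          _ U _ _ far that(3)] rho_pos D_bound that(2) by simp
  qed
  then have "{\<omega>\<in>space M. \<theta> \<in> ThetaSeq MT mu0 Nu D \<theta>s (polyW Piw piw) (\<lambda>j. w j \<omega>) t}
      \<subseteq> space M - (\<Union>b<t div Nu. \<Inter>j\<in>block Nu b. E j)"
    by blast
  moreover have "indep_events E UNIV"
    unfolding E_def by (rule indep_eventsI_indep_vars[OF indep]) auto
  ultimately show ?thesis
    using pw_bound w0(1) \<open>0 < e\<close> pw_range \<open>0 < Nu\<close>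
    by (intro prob_le_if_no_block_Inter[where E = E]) (auto simp: E_def e_def less_imp_le)
qed

end
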